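(* Let $H$ be a cocommutative Hopf algebra, $M$ a left $H$-module, $\alpha\in H\otimes H$, and $m\in M$ an element that is not torsion (i.e. $hm=0$ with $h\in H$ implies $h=0$). Then $\alpha\otimes_H m=0$ in $(H\otimes H)\otimes_H M$ if and only if $\alpha=0$.
   Context: $H\otimes H$ is a right $H$-module via $\alpha\cdot h=\alpha\Delta(h)$, which defines $(H\otimes H)\otimes_H M$. *)

theory Defs
  imports Complex_Main "HOL-Library.Poly_Mapping"
begin

text \<open>Free vector spaces over a field 'k are modelled by finitely supported
functions (poly_mapping). Tensor products are quotients of free vector spaces by
the relevant relations; elements of a tensor product are represented by elements
of the free space, and "t = 0 in the tensor product" means t lies in the span of
the relations.\<close>

definition pm_smul :: "'k::field \<Rightarrow> ('a \<Rightarrow>\<^sub>0 'k) \<Rightarrow> ('a \<Rightarrow>\<^sub>0 'k)" where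
  "pm_smul c p = Poly_Mapping.map (\<lambda>x. c * x) p"

definition gen :: "'a \<Rightarrow> ('a \<Rightarrow>\<^sub>0 'k::field)" where
  "gen x = Poly_Mapping.single x 1"

definition pspan :: "('a \<Rightarrow>\<^sub>0 'k::field) set \<Rightarrow> ('a \<Rightarrow>\<^sub>0 'k) set" where
  "pspan S = module.span pm_smul S"

definition bilin_rels ::
  "('k::field \<Rightarrow> 'v::ab_group_add \<Rightarrow> 'v) \<Rightarrow> ('k \<Rightarrow> 'w::ab_group_add \<Rightarrow> 'w)
     \<Rightarrow> (('v \<times> 'w) \<Rightarrow>\<^sub>0 'k) set" where
  "bilin_rels sV sW =
     {gen (x + x', y) - gen (x, y) - gen (x', y) | x x' y. True} \<union>
     {gen (x, y + y') - gen (x, y) - gen (x, y') | x y y'. True} \<union>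
     {gen (sV c x, y) - pm_smul c (gen (x, y)) | c x y. True} \<union>
     {gen (x, sW c y) - pm_smul c (gen (x, y)) | c x y. True}"

definition trilin_rels ::
  "('k::field \<Rightarrow> 'h::ab_group_add \<Rightarrow> 'h) \<Rightarrow> (('h \<times> 'h \<times> 'h) \<Rightarrow>\<^sub>0 'k) set" where
  "trilin_rels s =
     {gen (x + x', y, z) - gen (x, y, z) - gen (x', y, z) | x x' y z. True} \<union>
     {gen (x, y + y', z) - gen (x, y, z) - gen (x, y', z) | x y y' z. True} \<union>
     {gen (x, y, z + z') - gen (x, y, z) - gen (x, y, z') | x y z z'. True} \<union>
     {gen (s c x, y, z) - pm_smul c (gen (x, y, z)) | c x y z. True} \<union>
     {gen (x, s c y, z) - pm_smul c (gen (x, y, z)) | c x y z. True} \<union>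
     {gen (x, y, s c z) - pm_smul c (gen (x, y, z)) | c x y z. True}"

definition teq2 :: "('k::field \<Rightarrow> 'h::ab_group_add \<Rightarrow> 'h)
    \<Rightarrow> (('h \<times> 'h) \<Rightarrow>\<^sub>0 'k) \<Rightarrow> (('h \<times> 'h) \<Rightarrow>\<^sub>0 'k) \<Rightarrow> bool" where
  "teq2 s p q \<longleftrightarrow> p - q \<in> pspan (bilin_rels s s)"

definition teq3 :: "('k::field \<Rightarrow> 'h::ab_group_add \<Rightarrow> 'h)
    \<Rightarrow> (('h \<times> 'h \<times> 'h) \<Rightarrow>\<^sub>0 'k) \<Rightarrow> (('h \<times> 'h \<times> 'h) \<Rightarrow>\<^sub>0 'k) \<Rightarrow> bool" where
  "teq3 s p q \<longleftrightarrow> p - q \<in> pspan (trilin_rels s)"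

definition mult2 :: "(('h::ring_1 \<times> 'h) \<Rightarrow>\<^sub>0 'k::field) \<Rightarrow> (('h \<times> 'h) \<Rightarrow>\<^sub>0 'k)
    \<Rightarrow> (('h \<times> 'h) \<Rightarrow>\<^sub>0 'k)" where
  "mult2 p q = (\<Sum>(a, b)\<in>Poly_Mapping.keys p. \<Sum>(c, d)\<in>Poly_Mapping.keys q.
       pm_smul (Poly_Mapping.lookup p (a, b) * Poly_Mapping.lookup q (c, d)) (gen (a * c, b * d)))"

definition k_algebra :: "('k::field \<Rightarrow> 'h::ring_1 \<Rightarrow> 'h) \<Rightarrow> bool" where
  "k_algebra s \<longleftrightarrow> vector_space s \<and>
     (\<forall>c x y. s c (x * y) = s c x * y \<and> s c (x * y) = x * s c y)"

definition cocomm_hopf_algebra ::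
  "('k::field \<Rightarrow> 'h::ring_1 \<Rightarrow> 'h) \<Rightarrow> ('h \<Rightarrow> (('h \<times> 'h) \<Rightarrow>\<^sub>0 'k))
     \<Rightarrow> ('h \<Rightarrow> 'k) \<Rightarrow> ('h \<Rightarrow> 'h) \<Rightarrow> bool" where
  "cocomm_hopf_algebra s \<Delta> \<epsilon> S \<longleftrightarrow>
     k_algebra s \<and>
     \<comment> \<open>\<Delta> is a linear algebra homomorphism H \<rightarrow> H \<otimes> H\<close>
     (\<forall>x y. teq2 s (\<Delta> (x + y)) (\<Delta> x + \<Delta> y)) \<and>
     (\<forall>c x. teq2 s (\<Delta> (s c x)) (pm_smul c (\<Delta> x))) \<and>
     (\<forall>x y. teq2 s (\<Delta> (x * y)) (mult2 (\<Delta> x) (\<Delta> y))) \<and>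
     teq2 s (\<Delta> 1) (gen (1, 1)) \<and>
     \<comment> \<open>coassociativity\<close>
     (\<forall>h. teq3 s
        (\<Sum>(a, b)\<in>Poly_Mapping.keys (\<Delta> h). \<Sum>(c, d)\<in>Poly_Mapping.keys (\<Delta> a).
            pm_smul (Poly_Mapping.lookup (\<Delta> h) (a, b) * Poly_Mapping.lookup (\<Delta> a) (c, d)) (gen (c, d, b)))
        (\<Sum>(a, b)\<in>Poly_Mapping.keys (\<Delta> h). \<Sum>(c, d)\<in>Poly_Mapping.keys (\<Delta> b).
            pm_smul (Poly_Mapping.lookup (\<Delta> h) (a, b) * Poly_Mapping.lookup (\<Delta> b) (c, d)) (gen (a, c, d)))) \<and>
     \<comment> \<open>\<epsilon> is a linear algebra homomorphism H \<rightarrow> k\<close>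
     (\<forall>x y. \<epsilon> (x + y) = \<epsilon> x + \<epsilon> y) \<and>
     (\<forall>c x. \<epsilon> (s c x) = c * \<epsilon> x) \<and>
     (\<forall>x y. \<epsilon> (x * y) = \<epsilon> x * \<epsilon> y) \<and>
     \<epsilon> 1 = 1 \<and>
     \<comment> \<open>counit axioms\<close>
     (\<forall>h. (\<Sum>(a, b)\<in>Poly_Mapping.keys (\<Delta> h). s (Poly_Mapping.lookup (\<Delta> h) (a, b) * \<epsilon> a) b) = h) \<and>
     (\<forall>h. (\<Sum>(a, b)\<in>Poly_Mapping.keys (\<Delta> h). s (Poly_Mapping.lookup (\<Delta> h) (a, b) * \<epsilon> b) a) = h) \<and>
     \<comment> \<open>antipode: linear, S(h1) h2 = \<epsilon>(h) 1 = h1 S(h2)\<close>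
     (\<forall>x y. S (x + y) = S x + S y) \<and>
     (\<forall>c x. S (s c x) = s c (S x)) \<and>
     (\<forall>h. (\<Sum>(a, b)\<in>Poly_Mapping.keys (\<Delta> h). s (Poly_Mapping.lookup (\<Delta> h) (a, b)) (S a * b)) = s (\<epsilon> h) 1) \<and>
     (\<forall>h. (\<Sum>(a, b)\<in>Poly_Mapping.keys (\<Delta> h). s (Poly_Mapping.lookup (\<Delta> h) (a, b)) (a * S b)) = s (\<epsilon> h) 1) \<and>
     \<comment> \<open>cocommutativity\<close>
     (\<forall>h. teq2 s (\<Sum>(a, b)\<in>Poly_Mapping.keys (\<Delta> h). pm_smul (Poly_Mapping.lookup (\<Delta> h) (a, b)) (gen (b, a))) (\<Delta> h))"

text \<open>Left H-module M with action act (k acts through k\<cdot>1 \<subseteq> H).\<close>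
definition left_module :: "('h::ring_1 \<Rightarrow> 'm::ab_group_add \<Rightarrow> 'm) \<Rightarrow> bool" where
  "left_module act \<longleftrightarrow>
     (\<forall>x y m. act (x + y) m = act x m + act y m) \<and>
     (\<forall>x m n. act x (m + n) = act x m + act x n) \<and>
     (\<forall>x y m. act (x * y) m = act x (act y m)) \<and>
     (\<forall>m. act 1 m = m)"

text \<open>Relations defining (H \<otimes> H) \<otimes>_H M as a quotient of the free space on
(representatives of H \<otimes> H) \<times> M: k-bilinearity, the relations of H \<otimes> H in the
first slot, and the balancing relations \<alpha>\<Delta>(h) \<otimes> m = \<alpha> \<otimes> hm.\<close>
definition balanced_rels ::
  "('k::field \<Rightarrow> 'h::ring_1 \<Rightarrow> 'h) \<Rightarrow> ('h \<Rightarrow> (('h \<times> 'h) \<Rightarrow>\<^sub>0 'k))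
     \<Rightarrow> ('h \<Rightarrow> 'm::ab_group_add \<Rightarrow> 'm)
     \<Rightarrow> (((('h \<times> 'h) \<Rightarrow>\<^sub>0 'k) \<times> 'm) \<Rightarrow>\<^sub>0 'k) set" where
  "balanced_rels s \<Delta> act =
     bilin_rels pm_smul (\<lambda>c m. act (s c 1) m) \<union>
     {gen (r, m) | r m. r \<in> pspan (bilin_rels s s)} \<union>
     {gen (mult2 \<alpha> (\<Delta> h), m) - gen (\<alpha>, act h m) | \<alpha> h m. True}"

definition tensorH_zero ::
  "('k::field \<Rightarrow> 'h::ring_1 \<Rightarrow> 'h) \<Rightarrow> ('h \<Rightarrow> (('h \<times> 'h) \<Rightarrow>\<^sub>0 'k))
     \<Rightarrow> ('h \<Rightarrow> 'm::ab_group_add \<Rightarrow> 'm) \<Rightarrow> (('h \<times> 'h) \<Rightarrow>\<^sub>0 'k) \<Rightarrow> 'm \<Rightarrow> bool" where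
  "tensorH_zero s \<Delta> act \<alpha> m \<longleftrightarrow> gen (\<alpha>, m) \<in> pspan (balanced_rels s \<Delta> act)"

definition tensor2_zero ::
  "('k::field \<Rightarrow> 'h::ab_group_add \<Rightarrow> 'h) \<Rightarrow> (('h \<times> 'h) \<Rightarrow>\<^sub>0 'k) \<Rightarrow> bool" where
  "tensor2_zero s \<alpha> \<longleftrightarrow> \<alpha> \<in> pspan (bilin_rels s s)"

end

theory Submission
  imports Defs
begin

text \<open>The Galois map \<open>can(a \<otimes> b) = (a \<otimes> 1) \<Delta>(b)\<close> of \<open>H \<otimes> H\<close> is bijective, with inverse
\<open>a \<otimes> b \<mapsto> a S(b\<^sub>1) \<otimes> b\<^sub>2\<close> (coassociativity, antipode and counit axioms). The inverse turns
right multiplication by \<open>\<Delta>(h)\<close> into right multiplication of the second factor by \<open>h\<close>, so it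
identifies \<open>(H \<otimes> H) \<otimes>\<^sub>H M\<close> with \<open>H \<otimes> M\<close>. If \<open>m\<close> is not torsion, \<open>h \<mapsto> h m\<close> is an injective
linear map, hence has a linear retraction \<open>\<pi>\<close>, and \<open>\<beta> \<otimes> n \<mapsto> (id \<otimes> \<pi>(- n)) (can\<^sup>-\<^sup>1 \<beta>)\<close>
is a well-defined map \<open>(H \<otimes> H) \<otimes>\<^sub>H M \<rightarrow> H \<otimes> H\<close> sending \<open>\<alpha> \<otimes> m\<close> to \<open>can\<^sup>-\<^sup>1 \<alpha>\<close>.\<close>

section \<open>Linear maps out of free vector spaces\<close>

lemma lookup_pm_smul [simp]: "Poly_Mapping.lookup (pm_smul c p) x = c * Poly_Mapping.lookup p x"
  unfolding pm_smul_def by transfer (simp add: when_def)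

interpretation pm: module "pm_smul :: 'k::field \<Rightarrow> ('a \<Rightarrow>\<^sub>0 'k) \<Rightarrow> _"
  by unfold_locales (auto intro!: poly_mapping_eqI simp: lookup_add algebra_simps)

lemma pm_smul_add: "pm_smul c (p + q) = pm_smul c p + pm_smul c q"
  by (auto intro!: poly_mapping_eqI simp: lookup_add algebra_simps)

lemma pm_smul_diff: "pm_smul c (p - q) = pm_smul c p - pm_smul c q"
  by (auto intro!: poly_mapping_eqI simp: lookup_minus algebra_simps)

lemma pm_smul_add_left: "pm_smul (c + d) p = pm_smul c p + pm_smul d p"
  by (auto intro!: poly_mapping_eqI simp: lookup_add algebra_simps)

lemma pm_smul_sum: "pm_smul c (sum f A) = (\<Sum>x\<in>A. pm_smul c (f x))"
  by (induction A rule: infinite_finite_induct) (auto simp: pm_smul_add)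

definition lin_ext :: "('a \<Rightarrow> ('b \<Rightarrow>\<^sub>0 'k::field)) \<Rightarrow> ('a \<Rightarrow>\<^sub>0 'k) \<Rightarrow> ('b \<Rightarrow>\<^sub>0 'k)" where
  "lin_ext f p = (\<Sum>x\<in>Poly_Mapping.keys p. pm_smul (Poly_Mapping.lookup p x) (f x))"

lemma lin_ext_superset:
  assumes "finite A" "Poly_Mapping.keys p \<subseteq> A"
  shows "lin_ext f p = (\<Sum>x\<in>A. pm_smul (Poly_Mapping.lookup p x) (f x))"
  unfolding lin_ext_def
  by (rule sum.mono_neutral_left) (use assms in \<open>auto simp: in_keys_iff\<close>)

lemma lin_ext_add: "lin_ext f (p + q) = lin_ext f p + lin_ext f q"
proof -
  let ?A = "Poly_Mapping.keys p \<union> Poly_Mapping.keys q"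
  have "Poly_Mapping.keys (p + q) \<subseteq> ?A" by (rule keys_add)
  then have "lin_ext f (p + q) = (\<Sum>x\<in>?A. pm_smul (Poly_Mapping.lookup (p + q) x) (f x))"
    by (intro lin_ext_superset) auto
  also have "\<dots> = (\<Sum>x\<in>?A. pm_smul (Poly_Mapping.lookup p x) (f x))
                 + (\<Sum>x\<in>?A. pm_smul (Poly_Mapping.lookup q x) (f x))"
    by (simp add: lookup_add pm_smul_add_left sum.distrib)
  also have "\<dots> = lin_ext f p + lin_ext f q"
    by (subst (1 2) lin_ext_superset[where A = ?A]) auto
  finally show ?thesis .
qed

lemma lin_ext_smul: "lin_ext f (pm_smul c p) = pm_smul c (lin_ext f p)"
proof -
  have "Poly_Mapping.keys (pm_smul c p) \<subseteq> Poly_Mapping.keys p"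
    by (auto simp: in_keys_iff)
  then have "lin_ext f (pm_smul c p)
      = (\<Sum>x\<in>Poly_Mapping.keys p. pm_smul (c * Poly_Mapping.lookup p x) (f x))"
    by (subst lin_ext_superset[where A = "Poly_Mapping.keys p"]) auto
  then show ?thesis by (simp add: lin_ext_def pm_smul_sum)
qed

lemma lin_ext_zero [simp]: "lin_ext f 0 = 0"
  by (simp add: lin_ext_def)

lemma lin_ext_diff: "lin_ext f (p - q) = lin_ext f p - lin_ext f q"
  using lin_ext_add[of f "p - q" q] by simp

lemma lin_ext_sum: "lin_ext f (sum g A) = (\<Sum>x\<in>A. lin_ext f (g x))"
  by (induction A rule: infinite_finite_induct) (auto simp: lin_ext_add)

lemma lookup_gen: "Poly_Mapping.lookup (gen x :: _ \<Rightarrow>\<^sub>0 'k::field) y = (if x = y then 1 else 0)"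
  by (simp add: gen_def lookup_single)

lemma lin_ext_gen [simp]: "lin_ext f (gen x) = f x"
  by (simp add: lin_ext_def gen_def lookup_gen)

lemma lin_ext_compose: "lin_ext g (lin_ext f p) = lin_ext (\<lambda>x. lin_ext g (f x)) p"
proof -
  have "lin_ext g (lin_ext f p)
      = (\<Sum>x\<in>Poly_Mapping.keys p. lin_ext g (pm_smul (Poly_Mapping.lookup p x) (f x)))"
    by (simp only: lin_ext_def[of f] lin_ext_sum)
  then show ?thesis by (simp add: lin_ext_smul lin_ext_def[of "\<lambda>x. lin_ext g (f x)"])
qed

lemma lin_ext_gen_id [simp]: "lin_ext gen p = p"
proof (rule poly_mapping_eqI)
  fix y
  have "Poly_Mapping.lookup (lin_ext gen p) y
      = (\<Sum>x\<in>Poly_Mapping.keys p. if x = y then Poly_Mapping.lookup p x else 0)"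
    unfolding lin_ext_def lookup_sum by (rule sum.cong) (auto simp: lookup_gen)
  then show "Poly_Mapping.lookup (lin_ext gen p) y = Poly_Mapping.lookup p y"
    by (simp add: sum.delta' in_keys_iff)
qed

lemma lin_ext_fun_add: "lin_ext (\<lambda>x. f x + g x) p = lin_ext f p + lin_ext g p"
  by (simp add: lin_ext_def pm_smul_add sum.distrib)

lemma lin_ext_fun_smul: "lin_ext (\<lambda>x. pm_smul c (f x)) p = pm_smul c (lin_ext f p)"
  by (simp add: lin_ext_def pm_smul_sum mult.commute)

lemma lin_ext_cong: "(\<And>x. x \<in> Poly_Mapping.keys p \<Longrightarrow> f x = g x) \<Longrightarrow> lin_ext f p = lin_ext g p"
  by (simp add: lin_ext_def)

lemma lin_ext_in_pspan:
  assumes "p \<in> pspan S" and "\<And>r. r \<in> S \<Longrightarrow> lin_ext f r \<in> pspan T"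
  shows "lin_ext f p \<in> pspan T"
proof -
  have "module.subspace pm_smul {p. lin_ext f p \<in> pspan T}"
    unfolding pm.subspace_def
    by (auto simp: lin_ext_add lin_ext_smul pspan_def intro: pm.span_add pm.span_scale pm.span_zero)
  then show ?thesis
    using pm.span_induct[of p S "\<lambda>p. lin_ext f p \<in> pspan T"] assms unfolding pspan_def by auto
qed

lemma lin_ext_diff_in_pspan:
  assumes "\<And>x. x \<in> Poly_Mapping.keys p \<Longrightarrow> f x - g x \<in> pspan T"
  shows "lin_ext f p - lin_ext g p \<in> pspan T"
proof -
  have "lin_ext f p - lin_ext g p
      = (\<Sum>x\<in>Poly_Mapping.keys p. pm_smul (Poly_Mapping.lookup p x) (f x - g x))"
    by (simp add: lin_ext_def pm_smul_diff sum_subtractf)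
  also have "\<dots> \<in> pspan T"
    using assms unfolding pspan_def by (intro pm.span_sum pm.span_scale) auto
  finally show ?thesis .
qed

section \<open>Maps into \<open>H \<otimes> H\<close>\<close>

lemma teq2_refl [simp]: "teq2 s p p"
  by (simp add: teq2_def pspan_def pm.span_zero)

lemma teq2_sym: "teq2 s p q \<Longrightarrow> teq2 s q p"
  unfolding teq2_def pspan_def using pm.span_neg by fastforce

lemma teq2_trans [trans]: "teq2 s p q \<Longrightarrow> teq2 s q r \<Longrightarrow> teq2 s p r"
  unfolding teq2_def pspan_def using pm.span_add by fastforce

lemma teq2_add: "teq2 s p q \<Longrightarrow> teq2 s p' q' \<Longrightarrow> teq2 s (p + p') (q + q')"
  unfolding teq2_def pspan_def using pm.span_add by (fastforce simp: algebra_simps)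

lemma tensor2_zero_teq2: "teq2 s p q \<Longrightarrow> tensor2_zero s q \<Longrightarrow> tensor2_zero s p"
  unfolding tensor2_zero_def teq2_def pspan_def using pm.span_add by fastforce

lemma teq2_of_bilin_rel:
  assumes "p - q \<in> bilin_rels s s"
  shows "teq2 s p q"
  using assms unfolding teq2_def pspan_def by (rule pm.span_base)

lemma teq2_gen_add_left: "teq2 s (gen (x + x', y)) (gen (x, y) + gen (x', y))"
  and teq2_gen_add_right: "teq2 s (gen (x, y + y')) (gen (x, y) + gen (x, y'))"
  and teq2_gen_scale_left: "teq2 s (gen (s c x, y)) (pm_smul c (gen (x, y)))"
  and teq2_gen_scale_right: "teq2 s (gen (x, s c y)) (pm_smul c (gen (x, y)))"
  by (rule teq2_of_bilin_rel, unfold bilin_rels_def diff_diff_eq[symmetric], blast)+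

lemma lin_ext_teq2_pointwise:
  "(\<And>x. teq2 s (f x) (g x)) \<Longrightarrow> teq2 s (lin_ext f p) (lin_ext g p)"
  unfolding teq2_def by (rule lin_ext_diff_in_pspan) auto

text \<open>Linearity only up to the relations of \<open>H \<otimes> H\<close> in the target; such bilinear
(trilinear) maps descend to \<open>H \<otimes> H\<close> (\<open>H \<otimes> H \<otimes> H\<close>).\<close>

definition k_linear :: "('k::field \<Rightarrow> 'h::ab_group_add \<Rightarrow> 'h) \<Rightarrow> ('h \<Rightarrow> 'h) \<Rightarrow> bool" where
  "k_linear s \<phi> \<longleftrightarrow> (\<forall>x y. \<phi> (x + y) = \<phi> x + \<phi> y) \<and> (\<forall>c x. \<phi> (s c x) = s c (\<phi> x))"

definition linear_mod :: "('k::field \<Rightarrow> 'h::ab_group_add \<Rightarrow> 'h)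
    \<Rightarrow> ('h \<Rightarrow> (('h \<times> 'h) \<Rightarrow>\<^sub>0 'k)) \<Rightarrow> bool" where
  "linear_mod s G \<longleftrightarrow>
     (\<forall>x y. teq2 s (G (x + y)) (G x + G y)) \<and> (\<forall>c x. teq2 s (G (s c x)) (pm_smul c (G x)))"

definition bilinear_mod :: "('k::field \<Rightarrow> 'h::ab_group_add \<Rightarrow> 'h)
    \<Rightarrow> ('h \<times> 'h \<Rightarrow> (('h \<times> 'h) \<Rightarrow>\<^sub>0 'k)) \<Rightarrow> bool" where
  "bilinear_mod s f \<longleftrightarrow>
     (\<forall>x x' y. teq2 s (f (x + x', y)) (f (x, y) + f (x', y))) \<and>
     (\<forall>x y y'. teq2 s (f (x, y + y')) (f (x, y) + f (x, y'))) \<and>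
     (\<forall>c x y. teq2 s (f (s c x, y)) (pm_smul c (f (x, y)))) \<and>
     (\<forall>c x y. teq2 s (f (x, s c y)) (pm_smul c (f (x, y))))"

definition trilinear_mod :: "('k::field \<Rightarrow> 'h::ab_group_add \<Rightarrow> 'h)
    \<Rightarrow> ('h \<times> 'h \<times> 'h \<Rightarrow> (('h \<times> 'h) \<Rightarrow>\<^sub>0 'k)) \<Rightarrow> bool" where
  "trilinear_mod s f \<longleftrightarrow>
     (\<forall>x x' y z. teq2 s (f (x + x', y, z)) (f (x, y, z) + f (x', y, z))) \<and>
     (\<forall>x y y' z. teq2 s (f (x, y + y', z)) (f (x, y, z) + f (x, y', z))) \<and>
     (\<forall>x y z z'. teq2 s (f (x, y, z + z')) (f (x, y, z) + f (x, y, z'))) \<and>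
     (\<forall>c x y z. teq2 s (f (s c x, y, z)) (pm_smul c (f (x, y, z)))) \<and>
     (\<forall>c x y z. teq2 s (f (x, s c y, z)) (pm_smul c (f (x, y, z)))) \<and>
     (\<forall>c x y z. teq2 s (f (x, y, s c z)) (pm_smul c (f (x, y, z))))"

lemma k_linear_id: "k_linear s (\<lambda>x. x)"
  by (simp add: k_linear_def)

lemma linear_mod_zero:
  assumes "linear_mod s G"
  shows "teq2 s (G 0) 0"
proof -
  have "teq2 s (G (0 + 0)) (G 0 + G 0)"
    using assms unfolding linear_mod_def by blast
  then have "G 0 - (G 0 + G 0) \<in> pspan (bilin_rels s s)"
    by (simp add: teq2_def)
  then have "- G 0 \<in> pspan (bilin_rels s s)" by simp
  then show ?thesis unfolding teq2_def pspan_def using pm.span_neg by fastforce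
qed

lemma linear_mod_sum:
  assumes "linear_mod s G"
  shows "teq2 s (G (\<Sum>x\<in>A. s (c x) (F x))) (\<Sum>x\<in>A. pm_smul (c x) (G (F x)))"
proof (induction A rule: infinite_finite_induct)
  case (insert x A)
  have "teq2 s (G (s (c x) (F x) + (\<Sum>x\<in>A. s (c x) (F x))))
      (G (s (c x) (F x)) + G (\<Sum>x\<in>A. s (c x) (F x)))"
    using assms by (simp add: linear_mod_def)
  also have "teq2 s \<dots> (pm_smul (c x) (G (F x)) + (\<Sum>x\<in>A. pm_smul (c x) (G (F x))))"
    using assms insert by (intro teq2_add) (simp_all add: linear_mod_def)
  finally show ?case using insert by simp
qed (simp_all add: linear_mod_zero[OF assms])

lemma linear_mod_gen_left: "k_linear s \<phi> \<Longrightarrow> linear_mod s (\<lambda>x. gen (\<phi> x, d))"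
  and linear_mod_gen_right: "k_linear s \<phi> \<Longrightarrow> linear_mod s (\<lambda>y. gen (a, \<phi> y))"
  unfolding linear_mod_def k_linear_def
  by (simp_all add: teq2_gen_add_left teq2_gen_add_right teq2_gen_scale_left teq2_gen_scale_right)

lemma bilinear_mod_gen:
  "k_linear s \<phi> \<Longrightarrow> k_linear s \<phi>' \<Longrightarrow> bilinear_mod s (\<lambda>(x, y). gen (\<phi> x, \<phi>' y))"
  unfolding bilinear_mod_def k_linear_def
  by (simp add: teq2_gen_add_left teq2_gen_add_right teq2_gen_scale_left teq2_gen_scale_right)

lemma trilinear_mod_gen:
  assumes "\<And>c c' e. \<mu> (c + c') e = \<mu> c e + \<mu> c' e"
    and "\<And>c e e'. \<mu> c (e + e') = \<mu> c e + \<mu> c e'"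
    and "\<And>k c e. \<mu> (s k c) e = s k (\<mu> c e)"
    and "\<And>k c e. \<mu> c (s k e) = s k (\<mu> c e)"
  shows "trilinear_mod s (\<lambda>(c, e, f). gen (\<mu> c e, f))"
  using assms unfolding trilinear_mod_def
  by (simp add: teq2_gen_add_left teq2_gen_add_right teq2_gen_scale_left teq2_gen_scale_right)

lemma bilinear_mod_lin_ext:
  assumes "bilinear_mod s f" "tensor2_zero s p"
  shows "tensor2_zero s (lin_ext f p)"
  using assms(2) unfolding tensor2_zero_def
proof (rule lin_ext_in_pspan)
  fix r assume "r \<in> bilin_rels s s"
  then consider x x' y where "r = gen (x + x', y) - gen (x, y) - gen (x', y)"
    | x y y' where "r = gen (x, y + y') - gen (x, y) - gen (x, y')"
    | c x y where "r = gen (s c x, y) - pm_smul c (gen (x, y))"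
    | c x y where "r = gen (x, s c y) - pm_smul c (gen (x, y))"
    unfolding bilin_rels_def by blast
  then show "lin_ext f r \<in> pspan (bilin_rels s s)"
    by cases (use assms(1) in \<open>simp_all only: bilinear_mod_def teq2_def lin_ext_diff
        lin_ext_add lin_ext_smul lin_ext_gen diff_diff_eq\<close>)
qed

lemma bilinear_mod_lin_ext_teq2:
  "bilinear_mod s f \<Longrightarrow> teq2 s p q \<Longrightarrow> teq2 s (lin_ext f p) (lin_ext f q)"
  using bilinear_mod_lin_ext[of s f "p - q"] by (simp add: teq2_def tensor2_zero_def lin_ext_diff)

lemma trilinear_mod_lin_ext_teq3:
  assumes "trilinear_mod s f" "teq3 s p q"
  shows "teq2 s (lin_ext f p) (lin_ext f q)"
proof -
  have "lin_ext f (p - q) \<in> pspan (bilin_rels s s)"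
  proof (rule lin_ext_in_pspan)
    show "p - q \<in> pspan (trilin_rels s)" using assms(2) by (simp add: teq3_def)
  next
    fix r assume "r \<in> trilin_rels s"
    then consider x x' y z where "r = gen (x + x', y, z) - gen (x, y, z) - gen (x', y, z)"
      | x y y' z where "r = gen (x, y + y', z) - gen (x, y, z) - gen (x, y', z)"
      | x y z z' where "r = gen (x, y, z + z') - gen (x, y, z) - gen (x, y, z')"
      | c x y z where "r = gen (s c x, y, z) - pm_smul c (gen (x, y, z))"
      | c x y z where "r = gen (x, s c y, z) - pm_smul c (gen (x, y, z))"
      | c x y z where "r = gen (x, y, s c z) - pm_smul c (gen (x, y, z))"
      unfolding trilin_rels_def by (elim UnE CollectE exE) metis+
    then show "lin_ext f r \<in> pspan (bilin_rels s s)"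
      by cases (use assms(1) in \<open>simp_all only: trilinear_mod_def teq2_def lin_ext_diff
          lin_ext_add lin_ext_smul lin_ext_gen diff_diff_eq\<close>)
  qed
  then show ?thesis by (simp add: teq2_def lin_ext_diff)
qed

lemma bilinear_mod_lin_ext_param:
  assumes "\<And>z. bilinear_mod s (F z)"
  shows "bilinear_mod s (\<lambda>x. lin_ext (\<lambda>z. F z x) q)"
  using assms unfolding bilinear_mod_def lin_ext_fun_add[symmetric] lin_ext_fun_smul[symmetric]
  by (auto intro: lin_ext_teq2_pointwise)

lemma mult2_lin_ext: "mult2 p q = lin_ext (\<lambda>(a, b). lin_ext (\<lambda>(c, d). gen (a * c, b * d)) q) p"
  by (simp add: mult2_def lin_ext_def split_def pm_smul_sum)

locale field_algebra =
  fixes s :: "'k::field \<Rightarrow> 'h::ring_1 \<Rightarrow> 'h"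
  assumes k_algebra: "k_algebra s"
begin

sublocale vector_space s
  using k_algebra by (simp add: k_algebra_def)

lemma mult_scale_left [simp]: "s c x * y = s c (x * y)"
  and mult_scale_right [simp]: "x * s c y = s c (x * y)"
  using k_algebra unfolding k_algebra_def by metis+

lemma k_linear_mult_left: "k_linear s (\<lambda>x. a * x)"
  and k_linear_mult_right: "k_linear s (\<lambda>x. x * a)"
  by (simp_all add: k_linear_def distrib_left distrib_right)

lemma bilinear_mod_mult2: "bilinear_mod s (\<lambda>(a, b). lin_ext (\<lambda>(c, d). gen (a * c, b * d)) q)"
proof -
  have "bilinear_mod s (\<lambda>x. lin_ext (\<lambda>z. (\<lambda>(a, b). gen (a * fst z, b * snd z)) x) q)"
    by (rule bilinear_mod_lin_ext_param) (rule bilinear_mod_gen[OF k_linear_mult_right k_linear_mult_right])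
  then show ?thesis by (simp add: split_def)
qed

lemma mult2_teq2: "teq2 s p p' \<Longrightarrow> teq2 s (mult2 p q) (mult2 p' q)"
  unfolding mult2_lin_ext by (rule bilinear_mod_lin_ext_teq2[OF bilinear_mod_mult2])

end

section \<open>The Galois map of a Hopf algebra\<close>

locale cocomm_hopf = field_algebra s
  for s :: "'k::field \<Rightarrow> 'h::ring_1 \<Rightarrow> 'h" +
  fixes \<Delta> :: "'h \<Rightarrow> (('h \<times> 'h) \<Rightarrow>\<^sub>0 'k)" and \<epsilon> :: "'h \<Rightarrow> 'k" and S :: "'h \<Rightarrow> 'h"
  assumes hopf: "cocomm_hopf_algebra s \<Delta> \<epsilon> S"
begin

lemma comult_add: "teq2 s (\<Delta> (x + y)) (\<Delta> x + \<Delta> y)"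
  and comult_scale: "teq2 s (\<Delta> (s c x)) (pm_smul c (\<Delta> x))"
  and comult_mult: "teq2 s (\<Delta> (x * y)) (mult2 (\<Delta> x) (\<Delta> y))"
  and antipode_add: "S (x + y) = S x + S y"
  and antipode_scale: "S (s c x) = s c (S x)"
  and counit_left: "(\<Sum>(a, b)\<in>Poly_Mapping.keys (\<Delta> h). s (Poly_Mapping.lookup (\<Delta> h) (a, b) * \<epsilon> a) b) = h"
  and antipode_left: "(\<Sum>(a, b)\<in>Poly_Mapping.keys (\<Delta> h). s (Poly_Mapping.lookup (\<Delta> h) (a, b)) (S a * b)) = s (\<epsilon> h) 1"
  and antipode_right: "(\<Sum>(a, b)\<in>Poly_Mapping.keys (\<Delta> h). s (Poly_Mapping.lookup (\<Delta> h) (a, b)) (a * S b)) = s (\<epsilon> h) 1"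
  using hopf by (simp_all add: cocomm_hopf_algebra_def)

lemma coassoc: "teq3 s
    (lin_ext (\<lambda>(a, b). lin_ext (\<lambda>(c, d). gen (c, d, b)) (\<Delta> a)) (\<Delta> h))
    (lin_ext (\<lambda>(a, b). lin_ext (\<lambda>(c, d). gen (a, c, d)) (\<Delta> b)) (\<Delta> h))"
  using hopf by (simp add: cocomm_hopf_algebra_def lin_ext_def split_def pm_smul_sum)

lemma counit_left_teq2:
  assumes "linear_mod s G"
  shows "teq2 s (lin_ext (\<lambda>(a, b). pm_smul (\<epsilon> a) (G b)) (\<Delta> h)) (G h)"
proof -
  have "teq2 s (G h) (G (\<Sum>x\<in>Poly_Mapping.keys (\<Delta> h).
      s (Poly_Mapping.lookup (\<Delta> h) x * \<epsilon> (fst x)) (snd x)))"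
    using counit_left[of h] by (simp add: split_def)
  also have "teq2 s \<dots> (lin_ext (\<lambda>(a, b). pm_smul (\<epsilon> a) (G b)) (\<Delta> h))"
    using linear_mod_sum[OF assms] by (simp add: lin_ext_def split_def)
  finally show ?thesis by (rule teq2_sym)
qed

lemma convolution_unit_teq2:
  assumes "linear_mod s G"
    and unit: "(\<Sum>(a, b)\<in>Poly_Mapping.keys (\<Delta> h). s (Poly_Mapping.lookup (\<Delta> h) (a, b)) (\<mu> a b)) = s (\<epsilon> h) 1"
  shows "teq2 s (lin_ext (\<lambda>(a, b). G (\<mu> a b)) (\<Delta> h)) (pm_smul (\<epsilon> h) (G 1))"
proof -
  have "teq2 s (G (s (\<epsilon> h) 1))
      (G (\<Sum>x\<in>Poly_Mapping.keys (\<Delta> h). s (Poly_Mapping.lookup (\<Delta> h) x) (\<mu> (fst x) (snd x))))"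
    using unit by (simp add: split_def)
  also have "teq2 s \<dots> (lin_ext (\<lambda>(a, b). G (\<mu> a b)) (\<Delta> h))"
    using linear_mod_sum[OF assms(1)] by (simp add: lin_ext_def split_def)
  finally show ?thesis
    using assms teq2_sym teq2_trans unfolding linear_mod_def by blast
qed

text \<open>Both composites of the Galois map and its inverse have the shape below, with
\<open>\<mu> c e = S c * e\<close> resp. \<open>\<mu> c e = c * S e\<close>: coassociativity brings it to
\<open>a \<mu>(b\<^sub>1, b\<^sub>2) \<otimes> b\<^sub>3 = \<epsilon>(b\<^sub>1) a \<otimes> b\<^sub>2 = a \<otimes> b\<close>.\<close>

lemma coassoc_convolution_unit:
  assumes "\<And>c c' e. \<mu> (c + c') e = \<mu> c e + \<mu> c' e"
    and "\<And>c e e'. \<mu> c (e + e') = \<mu> c e + \<mu> c e'"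
    and "\<And>k c e. \<mu> (s k c) e = s k (\<mu> c e)"
    and "\<And>k c e. \<mu> c (s k e) = s k (\<mu> c e)"
    and unit: "\<And>h. (\<Sum>(a, b)\<in>Poly_Mapping.keys (\<Delta> h).
                  s (Poly_Mapping.lookup (\<Delta> h) (a, b)) (\<mu> a b)) = s (\<epsilon> h) 1"
  shows "teq2 s (lin_ext (\<lambda>(c, d). lin_ext (\<lambda>(e, f). gen (a * \<mu> c e, f)) (\<Delta> d)) (\<Delta> b)) (gen (a, b))"
proof -
  let ?T = "\<lambda>(c, e, f). gen (a * \<mu> c e, f)"
  have "trilinear_mod s ?T"
    by (rule trilinear_mod_gen) (simp_all add: assms(1-4) distrib_left)
  from trilinear_mod_lin_ext_teq3[OF this coassoc[of b]]
  have "teq2 s (lin_ext (\<lambda>(c, d). lin_ext (\<lambda>(e, f). gen (a * \<mu> c e, f)) (\<Delta> d)) (\<Delta> b))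
               (lin_ext (\<lambda>(c, d). lin_ext (\<lambda>(e, f). gen (a * \<mu> e f, d)) (\<Delta> c)) (\<Delta> b))"
    by (simp add: lin_ext_compose split_def teq2_sym)
  also have "teq2 s \<dots> (lin_ext (\<lambda>(c, d). pm_smul (\<epsilon> c) (gen (a, d))) (\<Delta> b))"
  proof (rule lin_ext_teq2_pointwise, simp only: split_paired_all prod.case)
    fix c d
    show "teq2 s (lin_ext (\<lambda>(e, f). gen (a * \<mu> e f, d)) (\<Delta> c)) (pm_smul (\<epsilon> c) (gen (a, d)))"
      using convolution_unit_teq2[OF linear_mod_gen_left[OF k_linear_mult_left] unit, of a d c]
      by simp
  qed
  also have "teq2 s \<dots> (gen (a, b))"
    using counit_left_teq2[OF linear_mod_gen_right[OF k_linear_id], of a b] by simp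
  finally show ?thesis .
qed

lemma bilinear_mod_lin_ext_comult:
  assumes "\<And>a. bilinear_mod s (g a)"
    and "\<And>a a' z. teq2 s (g (a + a') z) (g a z + g a' z)"
    and "\<And>c a z. teq2 s (g (s c a) z) (pm_smul c (g a z))"
  shows "bilinear_mod s (\<lambda>(a, b). lin_ext (g a) (\<Delta> b))"
  unfolding bilinear_mod_def
proof (intro conjI allI; simp only: prod.case)
  fix x x' y
  have "teq2 s (lin_ext (g (x + x')) (\<Delta> y)) (lin_ext (\<lambda>z. g x z + g x' z) (\<Delta> y))"
    by (rule lin_ext_teq2_pointwise) (rule assms(2))
  then show "teq2 s (lin_ext (g (x + x')) (\<Delta> y)) (lin_ext (g x) (\<Delta> y) + lin_ext (g x') (\<Delta> y))"
    by (simp add: lin_ext_fun_add)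
next
  fix x y y'
  have "teq2 s (lin_ext (g x) (\<Delta> (y + y'))) (lin_ext (g x) (\<Delta> y + \<Delta> y'))"
    by (rule bilinear_mod_lin_ext_teq2[OF assms(1) comult_add])
  then show "teq2 s (lin_ext (g x) (\<Delta> (y + y'))) (lin_ext (g x) (\<Delta> y) + lin_ext (g x) (\<Delta> y'))"
    by (simp add: lin_ext_add)
next
  fix c x y
  have "teq2 s (lin_ext (g (s c x)) (\<Delta> y)) (lin_ext (\<lambda>z. pm_smul c (g x z)) (\<Delta> y))"
    by (rule lin_ext_teq2_pointwise) (rule assms(3))
  then show "teq2 s (lin_ext (g (s c x)) (\<Delta> y)) (pm_smul c (lin_ext (g x) (\<Delta> y)))"
    by (simp add: lin_ext_fun_smul)
next
  fix c x y
  have "teq2 s (lin_ext (g x) (\<Delta> (s c y))) (lin_ext (g x) (pm_smul c (\<Delta> y)))"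
    by (rule bilinear_mod_lin_ext_teq2[OF assms(1) comult_scale])
  then show "teq2 s (lin_ext (g x) (\<Delta> (s c y))) (pm_smul c (lin_ext (g x) (\<Delta> y)))"
    by (simp add: lin_ext_smul)
qed

lemma bilinear_mod_comult_twist:
  assumes "k_linear s \<phi>"
  shows "bilinear_mod s (\<lambda>(a, b). lin_ext (\<lambda>(c, d). gen (a * \<phi> c, d)) (\<Delta> b))"
proof (rule bilinear_mod_lin_ext_comult)
  fix a
  have "k_linear s (\<lambda>c. a * \<phi> c)"
    using assms by (simp add: k_linear_def distrib_left)
  then show "bilinear_mod s (\<lambda>(c, d). gen (a * \<phi> c, d))"
    using bilinear_mod_gen[of s "\<lambda>c. a * \<phi> c" "\<lambda>x. x"] k_linear_id[of s] by simp
next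
  fix a a' z
  show "teq2 s ((\<lambda>(c, d). gen ((a + a') * \<phi> c, d)) z)
      ((\<lambda>(c, d). gen (a * \<phi> c, d)) z + (\<lambda>(c, d). gen (a' * \<phi> c, d)) z)"
    by (cases z) (simp add: distrib_right teq2_gen_add_left)
next
  fix c a z
  show "teq2 s ((\<lambda>(e, d). gen (s c a * \<phi> e, d)) z) (pm_smul c ((\<lambda>(e, d). gen (a * \<phi> e, d)) z))"
    by (cases z) (simp add: teq2_gen_scale_left)
qed

definition galois_gen :: "'h \<times> 'h \<Rightarrow> ('h \<times> 'h) \<Rightarrow>\<^sub>0 'k" where
  "galois_gen = (\<lambda>(a, b). lin_ext (\<lambda>(c, d). gen (a * c, d)) (\<Delta> b))"

definition galois :: "(('h \<times> 'h) \<Rightarrow>\<^sub>0 'k) \<Rightarrow> ('h \<times> 'h) \<Rightarrow>\<^sub>0 'k" where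
  "galois = lin_ext galois_gen"

definition galois_inv_gen :: "'h \<times> 'h \<Rightarrow> ('h \<times> 'h) \<Rightarrow>\<^sub>0 'k" where
  "galois_inv_gen = (\<lambda>(a, b). lin_ext (\<lambda>(c, d). gen (a * S c, d)) (\<Delta> b))"

definition galois_inv :: "(('h \<times> 'h) \<Rightarrow>\<^sub>0 'k) \<Rightarrow> ('h \<times> 'h) \<Rightarrow>\<^sub>0 'k" where
  "galois_inv = lin_ext galois_inv_gen"

lemma bilinear_mod_galois_gen: "bilinear_mod s galois_gen"
  unfolding galois_gen_def using bilinear_mod_comult_twist[OF k_linear_id] by simp

lemma bilinear_mod_galois_inv_gen: "bilinear_mod s galois_inv_gen"
  unfolding galois_inv_gen_def
  by (rule bilinear_mod_comult_twist) (simp add: k_linear_def antipode_add antipode_scale)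

lemma tensor2_zero_galois: "tensor2_zero s p \<Longrightarrow> tensor2_zero s (galois p)"
  unfolding galois_def by (rule bilinear_mod_lin_ext[OF bilinear_mod_galois_gen])

lemma tensor2_zero_galois_inv: "tensor2_zero s p \<Longrightarrow> tensor2_zero s (galois_inv p)"
  unfolding galois_inv_def by (rule bilinear_mod_lin_ext[OF bilinear_mod_galois_inv_gen])

lemma teq2_galois_inv: "teq2 s p q \<Longrightarrow> teq2 s (galois_inv p) (galois_inv q)"
  unfolding galois_inv_def by (rule bilinear_mod_lin_ext_teq2[OF bilinear_mod_galois_inv_gen])

lemma galois_galois_inv_gen: "teq2 s (galois (galois_inv_gen x)) (gen x)"
proof (cases x)
  case (Pair a b)
  have "galois (galois_inv_gen (a, b))
      = lin_ext (\<lambda>(c, d). lin_ext (\<lambda>(e, f). gen (a * (S c * e), f)) (\<Delta> d)) (\<Delta> b)"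
    by (simp add: galois_def galois_gen_def galois_inv_gen_def lin_ext_compose split_def mult.assoc)
  also have "teq2 s \<dots> (gen (a, b))"
    by (rule coassoc_convolution_unit)
      (simp_all add: antipode_left distrib_left distrib_right antipode_add antipode_scale)
  finally show ?thesis using Pair by simp
qed

lemma galois_inv_galois_gen: "teq2 s (galois_inv (galois_gen x)) (gen x)"
proof (cases x)
  case (Pair a b)
  have "galois_inv (galois_gen (a, b))
      = lin_ext (\<lambda>(c, d). lin_ext (\<lambda>(e, f). gen (a * (c * S e), f)) (\<Delta> d)) (\<Delta> b)"
    by (simp add: galois_inv_def galois_gen_def galois_inv_gen_def lin_ext_compose split_def mult.assoc)
  also have "teq2 s \<dots> (gen (a, b))"
    by (rule coassoc_convolution_unit)
      (simp_all add: antipode_right distrib_left distrib_right antipode_add antipode_scale)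
  finally show ?thesis using Pair by simp
qed

lemma galois_galois_inv: "teq2 s (galois (galois_inv p)) p"
proof -
  have "galois (galois_inv p) = lin_ext (\<lambda>x. galois (galois_inv_gen x)) p"
    by (simp add: galois_inv_def galois_def lin_ext_compose)
  also have "teq2 s \<dots> (lin_ext gen p)"
    by (rule lin_ext_teq2_pointwise) (rule galois_galois_inv_gen)
  finally show ?thesis by simp
qed

lemma galois_inv_galois: "teq2 s (galois_inv (galois p)) p"
proof -
  have "galois_inv (galois p) = lin_ext (\<lambda>x. galois_inv (galois_gen x)) p"
    by (simp add: galois_inv_def galois_def lin_ext_compose)
  also have "teq2 s \<dots> (lin_ext gen p)"
    by (rule lin_ext_teq2_pointwise) (rule galois_inv_galois_gen)
  finally show ?thesis by simp
qed

definition mult_right_snd :: "'h \<Rightarrow> (('h \<times> 'h) \<Rightarrow>\<^sub>0 'k) \<Rightarrow> ('h \<times> 'h) \<Rightarrow>\<^sub>0 'k" where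
  "mult_right_snd h p = lin_ext (\<lambda>(x, y). gen (x, y * h)) p"

lemma galois_mult_right_snd: "teq2 s (galois (mult_right_snd h p)) (mult2 (galois p) (\<Delta> h))"
proof -
  have "galois (mult_right_snd h p) = lin_ext (\<lambda>(x, y). galois_gen (x, y * h)) p"
    by (simp add: galois_def mult_right_snd_def lin_ext_compose split_def)
  also have "teq2 s \<dots> (lin_ext (\<lambda>x. mult2 (galois_gen x) (\<Delta> h)) p)"
  proof (rule lin_ext_teq2_pointwise, simp only: split_paired_all prod.case)
    fix x y
    have "galois_gen (x, y * h) = lin_ext (\<lambda>(c, d). gen (x * c, d)) (\<Delta> (y * h))"
      by (simp add: galois_gen_def)
    also have "teq2 s \<dots> (lin_ext (\<lambda>(c, d). gen (x * c, d)) (mult2 (\<Delta> y) (\<Delta> h)))"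
      using bilinear_mod_gen[OF k_linear_mult_left k_linear_id]
      by (intro bilinear_mod_lin_ext_teq2 comult_mult) simp
    also have "\<dots> = mult2 (galois_gen (x, y)) (\<Delta> h)"
      by (simp add: galois_gen_def mult2_lin_ext lin_ext_compose split_def mult.assoc)
    finally show "teq2 s (galois_gen (x, y * h)) (mult2 (galois_gen (x, y)) (\<Delta> h))" .
  qed
  also have "\<dots> = mult2 (galois p) (\<Delta> h)"
    by (simp add: galois_def mult2_lin_ext lin_ext_compose)
  finally show ?thesis .
qed

lemma galois_inv_mult_comult: "teq2 s (galois_inv (mult2 \<beta> (\<Delta> h))) (mult_right_snd h (galois_inv \<beta>))"
proof -
  have "teq2 s (mult2 \<beta> (\<Delta> h)) (mult2 (galois (galois_inv \<beta>)) (\<Delta> h))"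
    by (rule mult2_teq2[OF teq2_sym[OF galois_galois_inv]])
  also have "teq2 s \<dots> (galois (mult_right_snd h (galois_inv \<beta>)))"
    by (rule teq2_sym[OF galois_mult_right_snd])
  finally have "teq2 s (galois_inv (mult2 \<beta> (\<Delta> h)))
      (galois_inv (galois (mult_right_snd h (galois_inv \<beta>))))"
    by (rule teq2_galois_inv)
  also have "teq2 s \<dots> (mult_right_snd h (galois_inv \<beta>))"
    by (rule galois_inv_galois)
  finally show ?thesis .
qed

end

section \<open>Modules over the algebra\<close>

locale algebra_module = field_algebra s
  for s :: "'k::field \<Rightarrow> 'h::ring_1 \<Rightarrow> 'h" +
  fixes act :: "'h \<Rightarrow> 'm::ab_group_add \<Rightarrow> 'm"
  assumes left_module: "left_module act"
begin

abbreviation mscale :: "'k \<Rightarrow> 'm \<Rightarrow> 'm" where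
  "mscale c n \<equiv> act (s c 1) n"

lemma act_add_left: "act (x + y) n = act x n + act y n"
  and act_add_right: "act x (n + n') = act x n + act x n'"
  and act_mult: "act (x * y) n = act x (act y n)"
  and act_one: "act 1 n = n"
  using left_module unfolding left_module_def by blast+

lemma act_diff_left: "act (x - y) n = act x n - act y n"
  using act_add_left[of "x - y" y n] by (simp add: algebra_simps)

text \<open>Not a simp rule: its right-hand side contains an instance of its left-hand side.\<close>

lemma act_scale: "act (s c x) n = mscale c (act x n)"
  by (metis act_mult mult_1_left mult_scale_left)

lemma act_mscale: "act x (mscale c n) = act (s c x) n"
  by (metis act_mult mult_1_right mult_scale_right)

lemma vector_space_mscale: "vector_space mscale"
  by unfold_locales
    (simp_all add: act_add_left act_add_right scale_left_distrib act_one mult.commute flip: act_mult)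

lemma inj_act_nontorsion:
  assumes "\<forall>h. act h m = 0 \<longrightarrow> h = 0"
  shows "inj (\<lambda>h. act h m)"
proof (rule injI)
  fix x y assume "act x m = act y m"
  then have "act (x - y) m = 0"
    by (simp add: act_diff_left)
  then show "x = y"
    using assms by (metis right_minus_eq)
qed

lemma nontorsion_retraction:
  assumes "\<forall>h. act h m = 0 \<longrightarrow> h = 0"
  obtains \<pi> where "Vector_Spaces.linear mscale s \<pi>" "\<And>h. \<pi> (act h m) = h"
proof -
  have "Vector_Spaces.linear s mscale (\<lambda>h. act h m)"
    unfolding Vector_Spaces.linear_iff
    using vector_space_axioms vector_space_mscale act_add_left act_scale by blast
  then obtain \<pi> where "Vector_Spaces.linear mscale s \<pi>" "\<pi> \<circ> (\<lambda>h. act h m) = id"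
    using vector_space_pair.linear_injective_left_inverse inj_act_nontorsion[OF assms]
      vector_space_pair.intro[OF vector_space_axioms vector_space_mscale] by blast
  then show ?thesis
    by (metis that comp_apply id_apply)
qed

end

section \<open>Descending to \<open>(H \<otimes> H) \<otimes>\<^sub>H M\<close>\<close>

locale hopf_module_retraction = cocomm_hopf s \<Delta> \<epsilon> S + algebra_module s act
  for s :: "'k::field \<Rightarrow> 'h::ring_1 \<Rightarrow> 'h" and \<Delta> \<epsilon> S and act :: "'h \<Rightarrow> 'm::ab_group_add \<Rightarrow> 'm" +
  fixes m :: 'm and \<pi> :: "'m \<Rightarrow> 'h"
  assumes linear_retraction: "Vector_Spaces.linear mscale s \<pi>"
    and retraction: "\<And>h. \<pi> (act h m) = h"
begin

lemma retraction_add: "\<pi> (u + v) = \<pi> u + \<pi> v"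
  and retraction_scale: "\<pi> (mscale c u) = s c (\<pi> u)"
  using linear_retraction by (simp_all add: Vector_Spaces.linear_iff)

lemma k_linear_retraction_act: "k_linear s (\<lambda>y. \<pi> (act y n))"
  unfolding k_linear_def by (metis act_add_left retraction_add act_scale retraction_scale)

definition retract_snd :: "'m \<Rightarrow> (('h \<times> 'h) \<Rightarrow>\<^sub>0 'k) \<Rightarrow> ('h \<times> 'h) \<Rightarrow>\<^sub>0 'k" where
  "retract_snd n p = lin_ext (\<lambda>(x, y). gen (x, \<pi> (act y n))) p"

lemma retract_snd_base: "retract_snd m p = p"
proof -
  have "retract_snd m p = lin_ext gen p"
    unfolding retract_snd_def by (rule lin_ext_cong) (auto simp: retraction)
  then show ?thesis by simp
qed

lemma tensor2_zero_retract_snd: "tensor2_zero s p \<Longrightarrow> tensor2_zero s (retract_snd n p)"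
  unfolding retract_snd_def
  by (rule bilinear_mod_lin_ext) (use bilinear_mod_gen[OF k_linear_id k_linear_retraction_act] in simp)

lemma teq2_retract_snd: "teq2 s p q \<Longrightarrow> teq2 s (retract_snd n p) (retract_snd n q)"
  using tensor2_zero_retract_snd[of "p - q" n]
  by (simp add: teq2_def tensor2_zero_def retract_snd_def lin_ext_diff)

lemma retract_snd_add: "teq2 s (retract_snd (n + n') q) (retract_snd n q + retract_snd n' q)"
  unfolding retract_snd_def lin_ext_fun_add[symmetric]
  by (rule lin_ext_teq2_pointwise) (auto simp: act_add_right retraction_add teq2_gen_add_right)

lemma retract_snd_scale: "teq2 s (retract_snd (mscale c n) q) (pm_smul c (retract_snd n q))"
  unfolding retract_snd_def lin_ext_fun_smul[symmetric]
  by (rule lin_ext_teq2_pointwise)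
    (auto simp: act_mscale retraction_scale teq2_gen_scale_right intro: ssubst[OF act_scale])

lemma retract_snd_mult_right_snd: "retract_snd n (mult_right_snd h q) = retract_snd (act h n) q"
  by (simp add: retract_snd_def mult_right_snd_def lin_ext_compose split_def act_mult)

definition descent :: "((('h \<times> 'h) \<Rightarrow>\<^sub>0 'k) \<times> 'm) \<Rightarrow> ('h \<times> 'h) \<Rightarrow>\<^sub>0 'k" where
  "descent = (\<lambda>(\<beta>, n). retract_snd n (galois_inv \<beta>))"

lemma descent_balanced_rels:
  assumes "r \<in> balanced_rels s \<Delta> act"
  shows "tensor2_zero s (lin_ext descent r)"
proof -
  have zero: "tensor2_zero s 0"
    by (simp add: tensor2_zero_def pspan_def pm.span_zero)
  from assms consider
      x x' n where "r = gen (x + x', n) - gen (x, n) - gen (x', n)"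
    | x n n' where "r = gen (x, n + n') - gen (x, n) - gen (x, n')"
    | c x n where "r = gen (pm_smul c x, n) - pm_smul c (gen (x, n))"
    | c x n where "r = gen (x, mscale c n) - pm_smul c (gen (x, n))"
    | r' n where "r = gen (r', n)" "tensor2_zero s r'"
    | \<beta> h n where "r = gen (mult2 \<beta> (\<Delta> h), n) - gen (\<beta>, act h n)"
    unfolding balanced_rels_def bilin_rels_def tensor2_zero_def by blast
  then show ?thesis
  proof cases
    case 1
    then show ?thesis
      by (simp add: descent_def lin_ext_diff galois_inv_def retract_snd_def lin_ext_add zero)
  next
    case 2
    then show ?thesis
      using retract_snd_add[of n n' "galois_inv x"]
      by (simp add: descent_def lin_ext_diff lin_ext_add teq2_def tensor2_zero_def diff_diff_eq)
  next
    case 3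
    then show ?thesis
      by (simp add: descent_def lin_ext_diff galois_inv_def retract_snd_def lin_ext_smul zero)
  next
    case 4
    then show ?thesis
      using retract_snd_scale[of c n "galois_inv x"]
      by (simp add: descent_def lin_ext_diff lin_ext_smul teq2_def tensor2_zero_def)
  next
    case 5
    then show ?thesis
      by (simp add: descent_def tensor2_zero_retract_snd tensor2_zero_galois_inv)
  next
    case 6
    have "teq2 s (retract_snd n (galois_inv (mult2 \<beta> (\<Delta> h))))
        (retract_snd n (mult_right_snd h (galois_inv \<beta>)))"
      by (rule teq2_retract_snd[OF galois_inv_mult_comult])
    then show ?thesis
      using 6 by (simp add: descent_def lin_ext_diff teq2_def tensor2_zero_def retract_snd_mult_right_snd)
  qed
qed

lemma tensorH_zero_imp_tensor2_zero:
  assumes "tensorH_zero s \<Delta> act \<alpha> m"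
  shows "tensor2_zero s \<alpha>"
proof -
  have "tensor2_zero s (lin_ext descent (gen (\<alpha>, m)))"
    using assms unfolding tensorH_zero_def tensor2_zero_def
    by (rule lin_ext_in_pspan) (rule descent_balanced_rels[unfolded tensor2_zero_def])
  then have "tensor2_zero s (galois (galois_inv \<alpha>))"
    by (simp add: descent_def retract_snd_base tensor2_zero_galois)
  then show ?thesis
    by (rule tensor2_zero_teq2[OF teq2_sym[OF galois_galois_inv]])
qed

end

lemma tensor2_zero_imp_tensorH_zero: "tensor2_zero s \<alpha> \<Longrightarrow> tensorH_zero s \<Delta> act \<alpha> m"
  unfolding tensorH_zero_def tensor2_zero_def pspan_def
  by (rule pm.span_base) (auto simp: balanced_rels_def pspan_def)

theorem lemma2p8:
  fixes s :: "'k::field \<Rightarrow> 'h::ring_1 \<Rightarrow> 'h"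
    and \<Delta> :: "'h \<Rightarrow> (('h \<times> 'h) \<Rightarrow>\<^sub>0 'k)"
    and \<epsilon> :: "'h \<Rightarrow> 'k"
    and S :: "'h \<Rightarrow> 'h"
    and act :: "'h \<Rightarrow> 'm::ab_group_add \<Rightarrow> 'm"
    and \<alpha> :: "('h \<times> 'h) \<Rightarrow>\<^sub>0 'k"
    and m :: 'm
  assumes "cocomm_hopf_algebra s \<Delta> \<epsilon> S"
    and "left_module act"
    and "\<forall>h. act h m = 0 \<longrightarrow> h = 0"
  shows "tensorH_zero s \<Delta> act \<alpha> m \<longleftrightarrow> tensor2_zero s \<alpha>"
proof
  have "k_algebra s"
    using assms(1) by (simp add: cocomm_hopf_algebra_def)
  then interpret algebra_module s act
    using assms(2) by unfold_locales
  obtain \<pi> where "Vector_Spaces.linear mscale s \<pi>" "\<And>h. \<pi> (act h m) = h"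
    using nontorsion_retraction[OF assms(3)] by blast
  then interpret hopf_module_retraction s \<Delta> \<epsilon> S act m \<pi>
    using assms(1)
    by (intro hopf_module_retraction.intro cocomm_hopf.intro cocomm_hopf_axioms.intro
        hopf_module_retraction_axioms.intro field_algebra_axioms algebra_module_axioms)
  show "tensorH_zero s \<Delta> act \<alpha> m \<Longrightarrow> tensor2_zero s \<alpha>"
    by (rule tensorH_zero_imp_tensor2_zero)
qed (rule tensor2_zero_imp_tensorH_zero)

end
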